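(* Let $G$ be a connected graph in $\mathcal{C}$ and $C$ an induced $C_5$ in $G$ with vertices $0,\dots,4$ in cyclic order. For every $i$, no vertex of $X_i$ has two non-adjacent neighbours in $X\setminus X_i$.
   Context: $\mathcal{C}=\mathrm{Free}(\text{claw}, 4K_1, \text{5-wheel}, C_5\text{-twin}, P_5\text{-twin}, K_5-e)$, where $\mathrm{Free}(L)$ is the class of graphs with no induced subgraph isomorphic to a member of $L$; the claw is $K_{1,3}$; $4K_1$ is the edgeless graph on 4 vertices; the 5-wheel is $C_5$ plus a vertex adjacent to all five cycle vertices; the $C_5$-twin is $C_5$ plus a new vertex adjacent to one cycle vertex $v$ and both cycle-neighbours of $v$; the $P_5$-twin is a path $p_1p_2p_3p_4p_5$ plus a new vertex adjacent to exactly $p_2,p_3,p_4$; $K_5-e$ is $K_5$ minus one edge. Given an induced cycle $C$ of length 5 with vertices $0,\dots,4$ in cyclic order (indices taken mod 5): $R$ is the set of vertices outside $C$ with no neighbour in $C$; $X_j$ is the set of vertices outside $C$ whose neighbourhood in $C$ is exactly $\{j,j+1\}$; $Y_j$ is the set of vertices outside $C$ whose neighbourhood in $C$ is exactly $\{j,j+1,j+2,j+3\}$; $X=\bigcup_j X_j$, $Y=\bigcup_j Y_j$. *)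

theory Defs
  imports Main
begin

definition graph :: "'a set \<Rightarrow> ('a \<Rightarrow> 'a \<Rightarrow> bool) \<Rightarrow> bool" where
  "graph V E \<longleftrightarrow> finite V \<and> (\<forall>x y. E x y \<longrightarrow> E y x) \<and> (\<forall>x. \<not> E x x)
     \<and> (\<forall>x y. E x y \<longrightarrow> x \<in> V \<and> y \<in> V)"

definition connected_graph :: "'a set \<Rightarrow> ('a \<Rightarrow> 'a \<Rightarrow> bool) \<Rightarrow> bool" where
  "connected_graph V E \<longleftrightarrow> V \<noteq> {} \<and> (\<forall>x\<in>V. \<forall>y\<in>V. (\<lambda>a b. E a b)\<^sup>*\<^sup>* x y)"

definition has_induced :: "'b set \<Rightarrow> ('b \<Rightarrow> 'b \<Rightarrow> bool) \<Rightarrow> 'a set \<Rightarrow> ('a \<Rightarrow> 'a \<Rightarrow> bool) \<Rightarrow> bool" where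
  "has_induced VH EH V E \<longleftrightarrow> (\<exists>f. inj_on f VH \<and> f ` VH \<subseteq> V \<and>
      (\<forall>a\<in>VH. \<forall>b\<in>VH. a \<noteq> b \<longrightarrow> (E (f a) (f b) \<longleftrightarrow> EH a b)))"

definition symc :: "(nat \<times> nat) set \<Rightarrow> nat \<Rightarrow> nat \<Rightarrow> bool" where
  "symc S a b \<longleftrightarrow> (a, b) \<in> S \<or> (b, a) \<in> S"

definition cyc5_edges :: "(nat \<times> nat) set" where
  "cyc5_edges = {(0,1),(1,2),(2,3),(3,4),(4,0)}"

definition claw_E :: "nat \<Rightarrow> nat \<Rightarrow> bool" where
  "claw_E = symc {(0,1),(0,2),(0,3)}"
definition fourK1_E :: "nat \<Rightarrow> nat \<Rightarrow> bool" where
  "fourK1_E = symc {}"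
definition wheel5_E :: "nat \<Rightarrow> nat \<Rightarrow> bool" where
  "wheel5_E = symc (cyc5_edges \<union> {(5,0),(5,1),(5,2),(5,3),(5,4)})"
definition C5twin_E :: "nat \<Rightarrow> nat \<Rightarrow> bool" where
  "C5twin_E = symc (cyc5_edges \<union> {(5,4),(5,0),(5,1)})"
definition P5twin_E :: "nat \<Rightarrow> nat \<Rightarrow> bool" where
  "P5twin_E = symc {(0,1),(1,2),(2,3),(3,4),(5,1),(5,2),(5,3)}"
definition K5e_E :: "nat \<Rightarrow> nat \<Rightarrow> bool" where
  "K5e_E a b \<longleftrightarrow> a \<noteq> b \<and> {a, b} \<noteq> {0, 1}"

definition in_class_C :: "'a set \<Rightarrow> ('a \<Rightarrow> 'a \<Rightarrow> bool) \<Rightarrow> bool" where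
  "in_class_C V E \<longleftrightarrow>
     \<not> has_induced {0..<4} claw_E V E \<and>
     \<not> has_induced {0..<4} fourK1_E V E \<and>
     \<not> has_induced {0..<6} wheel5_E V E \<and>
     \<not> has_induced {0..<6} C5twin_E V E \<and>
     \<not> has_induced {0..<6} P5twin_E V E \<and>
     \<not> has_induced {0..<5} K5e_E V E"

definition induced_C5 :: "'a set \<Rightarrow> ('a \<Rightarrow> 'a \<Rightarrow> bool) \<Rightarrow> (nat \<Rightarrow> 'a) \<Rightarrow> bool" where
  "induced_C5 V E c \<longleftrightarrow> inj_on c {0..<5} \<and> c ` {0..<5} \<subseteq> V \<and>
     (\<forall>i<5. \<forall>j<5. E (c i) (c j) \<longleftrightarrow> (j = (i + 1) mod 5 \<or> i = (j + 1) mod 5))"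

definition nbrs_on_C :: "('a \<Rightarrow> 'a \<Rightarrow> bool) \<Rightarrow> (nat \<Rightarrow> 'a) \<Rightarrow> 'a \<Rightarrow> nat set" where
  "nbrs_on_C E c v = {j. j < 5 \<and> E v (c j)}"

definition Xset :: "'a set \<Rightarrow> ('a \<Rightarrow> 'a \<Rightarrow> bool) \<Rightarrow> (nat \<Rightarrow> 'a) \<Rightarrow> nat \<Rightarrow> 'a set" where
  "Xset V E c j = {v \<in> V - c ` {0..<5}. nbrs_on_C E c v = {j mod 5, (j + 1) mod 5}}"

definition Xall :: "'a set \<Rightarrow> ('a \<Rightarrow> 'a \<Rightarrow> bool) \<Rightarrow> (nat \<Rightarrow> 'a) \<Rightarrow> 'a set" where
  "Xall V E c = (\<Union>j<5. Xset V E c j)"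

end

theory Submission
  imports Defs "HOL-Number_Theory.Cong"
begin

text \<open>Rotate the cycle so that i = 0. If x \<in> X_0 had non-adjacent neighbours a, b in
X - X_0, then a claw centred at x forces one of a, b to see c_0 and one to see c_1, i.e. one
lies in X_4 and the other in X_1. But then c_3 c_2 c_1 x a is an induced P_5 and b is adjacent
to exactly its three middle vertices c_2, c_1, x: a P_5-twin.\<close>

lemma has_induced_listI:
  assumes "distinct vs" "length vs = n" "set vs \<subseteq> V"
    and "\<forall>k \<in> {0..<n}. \<forall>l \<in> {0..<n}. k \<noteq> l \<longrightarrow> (E (vs ! k) (vs ! l) \<longleftrightarrow> P k l)"
  shows "has_induced {0..<n} P V E"
  unfolding has_induced_def
proof (intro exI[of _ "(!) vs"] conjI)
  show "inj_on ((!) vs) {0..<n}"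
    using assms(1,2) by (simp add: inj_on_def nth_eq_iff_index_eq)
qed (use assms(2-4) in auto)

lemma graph_sym: "graph V E \<Longrightarrow> E u v \<longleftrightarrow> E v u"
  unfolding graph_def by blast

lemma graph_irrefl: "graph V E \<Longrightarrow> \<not> E u u"
  unfolding graph_def by blast

lemma graph_edge_in_V: "graph V E \<Longrightarrow> E u v \<Longrightarrow> u \<in> V \<and> v \<in> V"
  unfolding graph_def by blast

lemma claw_free_neighbours_adjacent:
  assumes G: "graph V E" and claw_free: "\<not> has_induced {0..<4} claw_E V E"
    and "E x u" "E x p" "E x q" "u \<noteq> p" "u \<noteq> q" "p \<noteq> q"
  shows "E u p \<or> E u q \<or> E p q"
proof (rule ccontr)
  assume "\<not> (E u p \<or> E u q \<or> E p q)"
  moreover have "x \<noteq> u" "x \<noteq> p" "x \<noteq> q"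
    using assms(3-5) graph_irrefl[OF G] by auto
  moreover have "{x, u, p, q} \<subseteq> V"
    using assms(3-5) graph_edge_in_V[OF G] by blast
  moreover have "{0..<4::nat} = {0, 1, 2, 3}" by auto
  ultimately have "has_induced {0..<4} claw_E V E"
    using assms(3-8) graph_sym[OF G]
    by (intro has_induced_listI[of "[x, u, p, q]"]) (auto simp: claw_E_def symc_def)
  with claw_free show False by simp
qed

lemma P5_twin_free_no_twin:
  assumes G: "graph V E" and twin_free: "\<not> has_induced {0..<6} P5twin_E V E"
    and path: "E p1 p2" "E p2 p3" "E p3 p4" "E p4 p5"
    and chords: "\<not> E p1 p3" "\<not> E p1 p4" "\<not> E p1 p5" "\<not> E p2 p4" "\<not> E p2 p5" "\<not> E p3 p5"
    and twin: "E t p2" "E t p3" "E t p4" "\<not> E t p1" "\<not> E t p5"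
  shows False
proof -
  have "distinct [p1, p2, p3, p4, p5, t]"
    using path chords twin graph_irrefl[OF G] graph_sym[OF G] by auto
  moreover have "set [p1, p2, p3, p4, p5, t] \<subseteq> V"
    using path twin graph_edge_in_V[OF G] by auto
  moreover have "{0..<6::nat} = {0, 1, 2, 3, 4, 5}" by auto
  ultimately have "has_induced {0..<6} P5twin_E V E"
    using path chords twin graph_sym[OF G]
    by (intro has_induced_listI[of "[p1, p2, p3, p4, p5, t]"]) (auto simp: P5twin_E_def symc_def)
  with twin_free show False by simp
qed

lemma Xset_iff:
  "v \<in> Xset V E c j \<longleftrightarrow>
     v \<in> V \<and> v \<notin> c ` {0..<5} \<and> (\<forall>k<5. E v (c k) \<longleftrightarrow> k = j mod 5 \<or> k = (j + 1) mod 5)"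
  unfolding Xset_def nbrs_on_C_def by (auto simp: set_eq_iff)

lemma mod_add_right_cancel_iff:
  fixes k m i n :: nat
  assumes "k < n"
  shows "(k + i) mod n = (m + i) mod n \<longleftrightarrow> k = m mod n"
  using cong_add_rcancel_nat[of k i m n] assms by (simp add: cong_def)

lemma mod_add_right_cancel_Suc_iff:
  fixes k m i n :: nat
  assumes "k < n"
  shows "(k + i) mod n = Suc ((m + i) mod n) mod n \<longleftrightarrow> k = Suc m mod n"
  using mod_add_right_cancel_iff[OF assms, of i "Suc m"] by (simp add: mod_simps)

lemma image_add_mod:
  fixes i n :: nat
  shows "(\<lambda>k. (k + i) mod n) ` {0..<n} = {0..<n}"
proof
  show "(\<lambda>k. (k + i) mod n) ` {0..<n} \<subseteq> {0..<n}" by auto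
next
  show "{0..<n} \<subseteq> (\<lambda>k. (k + i) mod n) ` {0..<n}"
  proof
    fix m assume m: "m \<in> {0..<n}"
    define k where "k = (m + (n - i mod n)) mod n"
    have "i mod n < n" using m by simp
    then have sum: "m + (n - i mod n) + i mod n = m + n" by linarith
    have "(k + i) mod n = (m + (n - i mod n) + i mod n) mod n"
      unfolding k_def by (simp add: mod_simps)
    also have "\<dots> = m" unfolding sum using m by simp
    finally show "m \<in> (\<lambda>k. (k + i) mod n) ` {0..<n}"
      using m by (intro image_eqI[of _ _ k]) (auto simp: k_def)
  qed
qed

lemma all_less_add_mod_iff:
  fixes i n :: nat
  shows "(\<forall>k<n. P ((k + i) mod n)) \<longleftrightarrow> (\<forall>m<n. P m)"
proof -
  have "(\<forall>k<n. P ((k + i) mod n)) \<longleftrightarrow> (\<forall>m\<in>(\<lambda>k. (k + i) mod n) ` {0..<n}. P m)"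
    by auto
  then show ?thesis
    unfolding image_add_mod by auto
qed

lemma image_comp_add_mod:
  fixes i n :: nat
  shows "(\<lambda>k. f ((k + i) mod n)) ` {0..<n} = f ` {0..<n}"
proof -
  have "(\<lambda>k. f ((k + i) mod n)) ` {0..<n} = f ` (\<lambda>k. (k + i) mod n) ` {0..<n}"
    by (simp add: image_image)
  then show ?thesis
    unfolding image_add_mod .
qed

lemma induced_C5_rotate:
  assumes "induced_C5 V E c"
  shows "induced_C5 V E (\<lambda>k. c ((k + i) mod 5))"
  unfolding induced_C5_def
proof (intro conjI allI impI)
  have "inj_on (\<lambda>k. (k + i) mod 5) {0..<5}"
    by (auto simp: inj_on_def mod_add_right_cancel_iff)
  then show "inj_on (\<lambda>k. c ((k + i) mod 5)) {0..<5}"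
    using assms comp_inj_on[of "\<lambda>k. (k + i) mod 5" "{0..<5}" c]
    by (simp add: induced_C5_def image_add_mod comp_def)
  show "(\<lambda>k. c ((k + i) mod 5)) ` {0..<5} \<subseteq> V"
    using assms by (simp add: induced_C5_def image_comp_add_mod)
  fix k l :: nat assume "k < 5" "l < 5"
  then show "E (c ((k + i) mod 5)) (c ((l + i) mod 5)) \<longleftrightarrow> l = (k + 1) mod 5 \<or> k = (l + 1) mod 5"
    using assms by (simp add: induced_C5_def mod_add_right_cancel_Suc_iff)
qed

lemma Xset_rotate:
  "Xset V E (\<lambda>k. c ((k + i) mod 5)) j = Xset V E c ((j + i) mod 5)"
proof (rule set_eqI)
  fix v
  have "(\<forall>k<5. E v (c ((k + i) mod 5)) \<longleftrightarrow> k = j mod 5 \<or> k = (j + 1) mod 5)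
    \<longleftrightarrow> (\<forall>k<5. E v (c ((k + i) mod 5)) \<longleftrightarrow>
          (k + i) mod 5 = (j + i) mod 5 \<or> (k + i) mod 5 = ((j + i) mod 5 + 1) mod 5)"
    by (simp add: mod_add_right_cancel_iff mod_add_right_cancel_Suc_iff)
  also have "\<dots> \<longleftrightarrow> (\<forall>m<5. E v (c m) \<longleftrightarrow> m = (j + i) mod 5 \<or> m = ((j + i) mod 5 + 1) mod 5)"
    by (rule all_less_add_mod_iff)
  finally show "v \<in> Xset V E (\<lambda>k. c ((k + i) mod 5)) j \<longleftrightarrow> v \<in> Xset V E c ((j + i) mod 5)"
    unfolding Xset_iff image_comp_add_mod by simp
qed

lemma Xall_rotate: "Xall V E (\<lambda>k. c ((k + i) mod 5)) = Xall V E c"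
proof -
  have "Xall V E (\<lambda>k. c ((k + i) mod 5)) = (\<Union>j<5. Xset V E c ((j + i) mod 5))"
    by (simp add: Xall_def Xset_rotate)
  also have "\<dots> = (\<Union>m\<in>(\<lambda>j. (j + i) mod 5) ` {0..<5}. Xset V E c m)"
    by (simp add: atLeast0LessThan)
  also have "\<dots> = Xall V E c"
    unfolding image_add_mod by (simp add: Xall_def atLeast0LessThan)
  finally show ?thesis .
qed

lemma X0_neighbours_in_X4_and_X1_adjacent:
  assumes G: "graph V E" and twin_free: "\<not> has_induced {0..<6} P5twin_E V E"
    and C: "induced_C5 V E c"
    and x: "x \<in> Xset V E c 0" and a: "a \<in> Xset V E c 4" and b: "b \<in> Xset V E c 1"
    and "E x a" "E x b"
  shows "E a b"
proof (rule ccontr)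
  assume "\<not> E a b"
  moreover have "E (c 3) (c 2)" "E (c 2) (c 1)" "\<not> E (c 3) (c 1)"
    using C by (auto simp: induced_C5_def)
  moreover have "E (c 1) x" "\<not> E (c 3) x" "\<not> E (c 2) x"
    using x graph_sym[OF G] by (auto simp: Xset_iff)
  moreover have "\<not> E (c 3) a" "\<not> E (c 2) a" "\<not> E (c 1) a"
    using a graph_sym[OF G] by (auto simp: Xset_iff)
  moreover have "E b (c 2)" "E b (c 1)" "\<not> E b (c 3)"
    using b by (auto simp: Xset_iff)
  ultimately show False
    using P5_twin_free_no_twin[OF G twin_free, of "c 3" "c 2" "c 1" x a b] \<open>E x a\<close> \<open>E x b\<close>
    by (simp add: graph_sym[OF G, of b a] graph_sym[OF G, of b x])
qed

lemma X0_no_nonadjacent_neighbours_in_other_X: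
  assumes G: "graph V E" and cls: "in_class_C V E" and C: "induced_C5 V E c"
    and x: "x \<in> Xset V E c 0"
    and a: "a \<in> Xall V E c - Xset V E c 0" and b: "b \<in> Xall V E c - Xset V E c 0"
    and "a \<noteq> b" "E x a" "E x b"
  shows "E a b"
proof (rule ccontr)
  assume nab: "\<not> E a b"
  have claw_free: "\<not> has_induced {0..<4} claw_E V E"
    and twin_free: "\<not> has_induced {0..<6} P5twin_E V E"
    using cls by (auto simp: in_class_C_def)
  obtain ja where ja: "ja < 5" "ja \<noteq> 0" "a \<in> Xset V E c ja"
    using a unfolding Xall_def by (auto simp: lessThan_iff)
  obtain jb where jb: "jb < 5" "jb \<noteq> 0" "b \<in> Xset V E c jb"
    using b unfolding Xall_def by (auto simp: lessThan_iff)
  have a_or_b_sees: "E a (c k) \<or> E b (c k)" if "k < 5" "E x (c k)" for k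
  proof -
    have "c k \<noteq> a" "c k \<noteq> b"
      using ja(3) jb(3) \<open>k < 5\<close> by (auto simp: Xset_iff)
    then show ?thesis
      using claw_free_neighbours_adjacent[OF G claw_free \<open>E x (c k)\<close> \<open>E x a\<close> \<open>E x b\<close>]
        \<open>a \<noteq> b\<close> nab graph_sym[OF G] by blast
  qed
  have sees_c0_c1: "(E v (c 0) \<longleftrightarrow> j = 4) \<and> (E v (c 1) \<longleftrightarrow> j = 1)"
    if "j < 5" "j \<noteq> 0" "v \<in> Xset V E c j" for v j
  proof -
    have "j \<in> {1, 2, 3, 4}" using that(1,2) by auto
    then show ?thesis
      using that(3) unfolding Xset_iff by (elim insertE; simp)
  qed
  have "E x (c 0)" "E x (c 1)"
    using x by (auto simp: Xset_iff)
  then have "E a (c 0) \<or> E b (c 0)" "E a (c 1) \<or> E b (c 1)"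
    using a_or_b_sees by auto
  then have "ja = 4 \<and> jb = 1 \<or> ja = 1 \<and> jb = 4"
    using sees_c0_c1[OF ja] sees_c0_c1[OF jb] by auto
  then show False
  proof
    assume "ja = 4 \<and> jb = 1"
    then show False
      using X0_neighbours_in_X4_and_X1_adjacent[OF G twin_free C x, of a b] ja(3) jb(3)
        \<open>E x a\<close> \<open>E x b\<close> nab by simp
  next
    assume "ja = 1 \<and> jb = 4"
    then show False
      using X0_neighbours_in_X4_and_X1_adjacent[OF G twin_free C x, of b a] ja(3) jb(3)
        \<open>E x a\<close> \<open>E x b\<close> nab graph_sym[OF G, of b a] by simp
  qed
qed

theorem claim18:
  fixes V :: "'a set" and E :: "'a \<Rightarrow> 'a \<Rightarrow> bool" and c :: "nat \<Rightarrow> 'a"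
  assumes "graph V E" and "connected_graph V E" and "in_class_C V E"
    and "induced_C5 V E c"
    and "i < 5"
  shows "\<not> (\<exists>x \<in> Xset V E c i. \<exists>a \<in> Xall V E c - Xset V E c i. \<exists>b \<in> Xall V E c - Xset V E c i.
            a \<noteq> b \<and> E x a \<and> E x b \<and> \<not> E a b)"
proof -
  let ?c = "\<lambda>k. c ((k + i) mod 5)"
  have rotated: "Xset V E ?c 0 = Xset V E c i" "Xall V E ?c = Xall V E c"
    using \<open>i < 5\<close> by (simp_all add: Xset_rotate Xall_rotate)
  have "E a b"
    if "x \<in> Xset V E c i" "a \<in> Xall V E c - Xset V E c i" "b \<in> Xall V E c - Xset V E c i"
      "a \<noteq> b" "E x a" "E x b" for x a b
    using X0_no_nonadjacent_neighbours_in_other_X[OF \<open>graph V E\<close> \<open>in_class_C V E\<close>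
        induced_C5_rotate[OF \<open>induced_C5 V E c\<close>, of i]] that
    unfolding rotated by blast
  then show ?thesis by blast
qed

end
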